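(* Let $A_1,A_2\in\mathbb{R}^{n\times n}$ be symmetric positive semidefinite and $\mathcal{A}=(A_1,A_2)$. Then $\mathrm{Opt}(\mathcal{A})=\mathrm{OptSDP}(\mathcal{A})$.
   Context: Here $\mathbb{K}=\mathbb{R}$: $\mathrm{Opt}(\mathcal{A})=\max_{x\in\mathbb{R}^n,\|x\|=1}\big(\prod_{i=1}^d x^TA_ix\big)^{1/d}$ and $\mathrm{OptSDP}(\mathcal{A})=\max\big\{\big(\prod_{i=1}^d\operatorname{Tr}(A_iX)\big)^{1/d}: X\in\mathbb{R}^{n\times n}\text{ symmetric},\ X\succeq0,\ \operatorname{Tr}X=1\big\}$, with $d=2$. *)

theory Defs
  imports "HOL-Analysis.Analysis"
begin

definition sym_mat :: "real^'n^'n \<Rightarrow> bool" where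
  "sym_mat A \<longleftrightarrow> transpose A = A"

definition psd_mat :: "real^'n^'n \<Rightarrow> bool" where
  "psd_mat A \<longleftrightarrow> sym_mat A \<and> (\<forall>x. 0 \<le> x \<bullet> (A *v x))"

definition Opt2 :: "real^'n^'n \<Rightarrow> real^'n^'n \<Rightarrow> real" where
  "Opt2 A1 A2 = Sup {((x \<bullet> (A1 *v x)) * (x \<bullet> (A2 *v x))) powr (1/2) | x. norm x = 1}"

definition OptSDP2 :: "real^'n^'n \<Rightarrow> real^'n^'n \<Rightarrow> real" where
  "OptSDP2 A1 A2 = Sup {(trace (A1 ** X) * trace (A2 ** X)) powr (1/2) | X. psd_mat X \<and> trace X = 1}"

end

theory Submission
  imports Defs
begin

text \<open>
  Let \<open>x\<^sub>0\<close> maximise \<open>(x\<^sup>T A\<^sub>1 x)(x\<^sup>T A\<^sub>2 x)\<close> on the unit sphere, with values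
  \<open>p\<close> and \<open>q\<close> of the two forms there. Along the great circle through \<open>x\<^sub>0\<close> and a unit
  vector \<open>e \<bottom> x\<^sub>0\<close> the product is a quartic in the tangent of the angle that never exceeds
  its value at \<open>x\<^sub>0\<close>; this forces \<open>q e\<^sup>T A\<^sub>1 e + p e\<^sup>T A\<^sub>2 e \<le> 2pq\<close> and kills the mixed
  terms, so \<open>2pq I - q A\<^sub>1 - p A\<^sub>2\<close> is positive semidefinite. Pairing it with a density
  matrix \<open>X\<close> gives \<open>q tr(A\<^sub>1X) + p tr(A\<^sub>2X) \<le> 2pq\<close>, and AM-GM turns this into
  \<open>tr(A\<^sub>1X) tr(A\<^sub>2X) \<le> pq\<close>. If \<open>p = q = 0\<close> either \<open>A\<^sub>1 = 0\<close> or some other maximiser has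
  \<open>p > 0\<close>. Conversely \<open>X = x\<^sub>0x\<^sub>0\<^sup>T\<close> attains \<open>pq\<close>.
\<close>

lemma quadratic_nonneg_coeffs:
  fixes a b c :: real
  assumes nonneg: "\<And>t. t \<noteq> 0 \<Longrightarrow> 0 \<le> a + 2*b*t + c*t^2"
  shows "0 \<le> a" and "0 \<le> c" and "b^2 \<le> a*c"
proof -
  have "isCont (\<lambda>t::real. a + 2*b*t + c*t^2) 0" by simp
  then have "((\<lambda>t. a + 2*b*t + c*t^2) \<longlongrightarrow> a) (at 0)" by (simp add: isCont_def)
  moreover have "eventually (\<lambda>t. 0 \<le> a + 2*b*t + c*t^2) (at (0::real))"
    using nonneg by (auto simp: eventually_at_filter)
  ultimately show a: "0 \<le> a" by (rule tendsto_lowerbound) simp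
  show c: "0 \<le> c"
  proof (rule ccontr)
    assume "\<not> 0 \<le> c"
    define t where "t = max 1 ((2*\<bar>b\<bar> + a + 1) / (- c))"
    have t1: "1 \<le> t" by (simp add: t_def)
    have "(2*\<bar>b\<bar> + a + 1) / (- c) \<le> t" by (simp add: t_def)
    then have "2*\<bar>b\<bar> + a + 1 \<le> (- c) * t"
      using \<open>\<not> 0 \<le> c\<close> by (simp add: field_simps)
    then have "t * (c*t + 2*\<bar>b\<bar> + a) \<le> t * (- 1)" using t1 by (intro mult_left_mono) auto
    moreover have "a + 2*b*t + c*t^2 \<le> t * (c*t + 2*\<bar>b\<bar> + a)"
    proof -
      have "2*b*t \<le> 2*\<bar>b\<bar>*t" using t1 by (intro mult_right_mono) auto
      moreover have "a \<le> a * t" using t1 a by (simp add: mult_le_cancel_left1)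
      ultimately show ?thesis by (simp add: algebra_simps power2_eq_square)
    qed
    ultimately show False using nonneg[of t] t1 by linarith
  qed
  show "b^2 \<le> a*c"
  proof (cases "b = 0")
    case True
    then show ?thesis using a c by simp
  next
    case b: False
    show ?thesis
    proof (cases "c = 0")
      case True
      have "a + 2*b*(-(a+1)/(2*b)) + c*(-(a+1)/(2*b))^2 = -1" using True b by (simp add: field_simps)
      moreover have "-(a+1)/(2*b) \<noteq> 0" using a b by simp
      ultimately show ?thesis using nonneg[of "-(a+1)/(2*b)"] by simp
    next
      case False
      then have "0 < c" using c by simp
      have "a + 2*b*(-b/c) + c*(-b/c)^2 = a - b^2/c"
        using \<open>0 < c\<close> by (simp add: field_simps power2_eq_square)
      then have "0 \<le> a - b^2/c" using nonneg[of "-b/c"] b \<open>0 < c\<close> by simp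
      then show ?thesis using \<open>0 < c\<close> by (simp add: field_simps)
    qed
  qed
qed

lemma tangent_bound_normalized:
  fixes a u s :: real
  assumes le: "\<And>t. (1 + 2*a*t + u*t^2) * (1 - 2*a*t + s*t^2) \<le> (1 + t^2)^2"
  shows "u + s \<le> 2"
proof -
  define g where "g = 2 - (u + s) + 4*a^2"
  have "0 \<le> g + 2*(a*(u - s))*t + (1 - u * s)*t^2" if "t \<noteq> 0" for t
  proof -
    have "(1 + t^2)^2 - (1 + 2*a*t + u*t^2) * (1 - 2*a*t + s*t^2)
        = t^2 * (g + 2*(a*(u - s))*t + (1 - u * s)*t^2)"
      by (simp add: g_def algebra_simps power2_eq_square)
    then have "0 \<le> t^2 * (g + 2*(a*(u - s))*t + (1 - u * s)*t^2)" using le[of t] by simp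
    then show ?thesis using that by (simp add: zero_le_mult_iff)
  qed
  note coeffs = quadratic_nonneg_coeffs[OF this]
  show ?thesis
  proof (rule ccontr)
    assume "\<not> u + s \<le> 2"
    have "(u + s)^2 - 4 = (u + s - 2) * (u + s + 2)" by (simp add: algebra_simps power2_eq_square)
    then have "0 < (u + s)^2 - 4" using \<open>\<not> u + s \<le> 2\<close> by simp
    have "(2 - (u + s)) * (1 - u * s) \<le> 0"
      using coeffs(2) \<open>\<not> u + s \<le> 2\<close> by (simp add: mult_nonpos_nonneg)
    moreover have "g * (1 - u * s) - (a*(u - s))^2 = (2 - (u + s)) * (1 - u * s) - a^2 * ((u + s)^2 - 4)"
      by (simp add: g_def algebra_simps power2_eq_square)
    ultimately have "a^2 * ((u + s)^2 - 4) \<le> 0" using coeffs(3) by linarith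
    then have "a = 0" using \<open>0 < (u + s)^2 - 4\<close> by (simp add: mult_le_0_iff)
    then show False using coeffs(1) \<open>\<not> u + s \<le> 2\<close> by (simp add: g_def)
  qed
qed

lemma tangent_bound_degenerate:
  fixes q b s u :: real
  assumes le: "\<And>t. u*t^2 * (q + 2*b*t + s*t^2) \<le> 0"
  shows "q*u \<le> 0"
proof -
  have "0 \<le> - (q*u) + 2*(- (b*u))*t + (- (s*u))*t^2" if "t \<noteq> 0" for t
  proof -
    have "t^2 * (u * (q + 2*b*t + s*t^2)) \<le> 0" using le[of t] by (simp add: mult_ac)
    then have "u * (q + 2*b*t + s*t^2) \<le> 0" using that by (simp add: mult_le_0_iff)
    then show ?thesis by (simp add: algebra_simps)
  qed
  from quadratic_nonneg_coeffs(1)[OF this] show ?thesis by simp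
qed

lemma tangent_bound:
  fixes p q a b u s :: real
  assumes "0 \<le> p" "0 \<le> q" "a^2 \<le> p*u" "b^2 \<le> q * s"
    and le: "\<And>t. (p + 2*a*t + u*t^2) * (q + 2*b*t + s*t^2) \<le> p*q*(1 + t^2)^2"
  shows "q*a + p*b = 0" and "q*u + p * s \<le> 2*p*q"
proof -
  define f where "f t = (p + 2*a*t + u*t^2) * (q + 2*b*t + s*t^2) - p*q*(1 + t^2)^2" for t :: real
  have "DERIV f 0 :> 2*(q*a + p*b)" unfolding f_def
    by (rule derivative_eq_intros refl)+ (simp add: algebra_simps)
  moreover have "\<forall>t. \<bar>0 - t\<bar> < 1 \<longrightarrow> f t \<le> f 0" using le by (simp add: f_def)
  ultimately have "2*(q*a + p*b) = 0" using DERIV_local_max[OF _ zero_less_one] by blast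
  then show tangent: "q*a + p*b = 0" by simp
  consider "p = 0" | "q = 0" | "0 < p" "0 < q" using assms(1,2) by linarith
  then show "q*u + p * s \<le> 2*p*q"
  proof cases
    case 1
    then have "a = 0" using assms(3) by simp
    then show ?thesis using tangent_bound_degenerate[of u q b s] le \<open>p = 0\<close> by simp
  next
    case 2
    then have "b = 0" using assms(4) by simp
    then show ?thesis using tangent_bound_degenerate[of s p a u] le \<open>q = 0\<close> by (simp add: mult_ac)
  next
    case 3
    have "u/p + s/q \<le> 2"
    proof (rule tangent_bound_normalized[of "a/p"])
      fix t :: real
      have b: "b = - q*(a/p)" using tangent \<open>0 < p\<close> by (simp add: field_simps)
      have "(1 + 2*(a/p)*t + (u/p)*t^2) * (1 - 2*(a/p)*t + (s/q)*t^2)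
          = (p + 2*a*t + u*t^2) * (q + 2*b*t + s*t^2) / (p*q)"
        using 3 unfolding b by (simp add: field_simps power2_eq_square)
      also have "\<dots> \<le> (1 + t^2)^2" using le[of t] 3 by (simp add: divide_le_eq mult_ac)
      finally show "(1 + 2*(a/p)*t + (u/p)*t^2) * (1 - 2*(a/p)*t + (s/q)*t^2) \<le> (1 + t^2)^2" .
    qed
    then show ?thesis using 3 by (simp add: field_simps)
  qed
qed

lemma product_le_of_tangent_bound:
  fixes p q S T :: real
  assumes "0 \<le> S" "0 \<le> T" "0 \<le> p" "0 \<le> q" "0 < p \<or> 0 < q"
    and tangent: "q*S + p*T \<le> 2*p*q"
  shows "S*T \<le> p*q"
proof -
  consider "0 < p" "0 < q" | "q = 0" "0 < p" | "p = 0" "0 < q" using assms(3-5) by linarith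
  then show ?thesis
  proof cases
    case 1
    have "4*(p*q)*(S*T) \<le> (q*S + p*T)^2"
      using zero_le_power2[of "q*S - p*T"] by (simp add: power2_eq_square algebra_simps)
    also have "\<dots> \<le> (2*p*q)^2" using tangent assms(1-4) by (intro power_mono) simp_all
    also have "\<dots> = 4*(p*q)*(p*q)" by (simp add: power2_eq_square)
    finally show ?thesis using 1 by simp
  next
    case 2
    then have "T = 0" using tangent assms(2) by (simp add: mult_le_0_iff)
    then show ?thesis using 2 by simp
  next
    case 3
    then have "S = 0" using tangent assms(1) by (simp add: mult_le_0_iff)
    then show ?thesis using 3 by simp
  qed
qed

lemma sym_mat_inner_commute:
  fixes A :: "real^'n^'n"
  assumes "sym_mat A"
  shows "w \<bullet> (A *v v) = v \<bullet> (A *v w)"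
proof -
  have "w \<bullet> (A *v v) = (w v* A) \<bullet> v" by (simp add: dot_lmul_matrix)
  also have "w v* A = transpose A *v w" by simp
  also have "\<dots> = A *v w" using assms by (simp add: sym_mat_def)
  finally show ?thesis by (simp add: inner_commute)
qed

lemma quadratic_form_lincomb:
  fixes A :: "real^'n^'n"
  assumes "sym_mat A"
  shows "(a *\<^sub>R v + b *\<^sub>R w) \<bullet> (A *v (a *\<^sub>R v + b *\<^sub>R w))
       = a^2 * (v \<bullet> (A *v v)) + 2*a*b * (v \<bullet> (A *v w)) + b^2 * (w \<bullet> (A *v w))"
  using sym_mat_inner_commute[OF assms, of w v]
  by (simp add: matrix_vector_right_distrib matrix_vector_mult_scaleR inner_add_left inner_add_right
      algebra_simps power2_eq_square)

lemma quadratic_form_scaleR: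
  fixes A :: "real^'n^'n"
  shows "(c *\<^sub>R v) \<bullet> (A *v (c *\<^sub>R v)) = c^2 * (v \<bullet> (A *v v))"
  by (simp add: matrix_vector_mult_scaleR power2_eq_square)

lemma psd_mat_imp_sym: "psd_mat A \<Longrightarrow> sym_mat A"
  by (simp add: psd_mat_def)

lemma psd_mat_nonneg: "psd_mat A \<Longrightarrow> 0 \<le> x \<bullet> (A *v x)"
  by (simp add: psd_mat_def)

lemma psd_mat_cauchy_schwarz:
  assumes "psd_mat X"
  shows "(y \<bullet> (X *v v))^2 \<le> (y \<bullet> (X *v y)) * (v \<bullet> (X *v v))"
proof -
  have "0 \<le> y \<bullet> (X *v y) + 2 * (y \<bullet> (X *v v)) * t + (v \<bullet> (X *v v)) * t^2" for t
    using psd_mat_nonneg[OF assms, of "1 *\<^sub>R y + t *\<^sub>R v"]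
    unfolding quadratic_form_lincomb[OF psd_mat_imp_sym[OF assms]] by (simp add: algebra_simps)
  from quadratic_nonneg_coeffs(3)[OF this] show ?thesis .
qed

lemma psd_mat_pos_if_mult_nonzero:
  assumes "psd_mat X" and "X *v v \<noteq> 0"
  shows "0 < v \<bullet> (X *v v)"
proof (rule ccontr)
  assume "\<not> 0 < v \<bullet> (X *v v)"
  then have "v \<bullet> (X *v v) = 0" using psd_mat_nonneg[OF assms(1), of v] by linarith
  then have "((X *v v) \<bullet> (X *v v))^2 \<le> 0"
    using psd_mat_cauchy_schwarz[OF assms(1), of "X *v v" v] by simp
  then show False using assms(2) by simp
qed

lemma psd_mat_nonzero:
  assumes "psd_mat A" and "A \<noteq> 0"
  obtains x where "norm x = 1" and "0 < x \<bullet> (A *v x)"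
proof -
  obtain v where "A *v v \<noteq> 0" using \<open>A \<noteq> 0\<close> by (metis matrix_eq matrix_vector_mult_0)
  then have pos: "0 < v \<bullet> (A *v v)" by (rule psd_mat_pos_if_mult_nonzero[OF assms(1)])
  then have "v \<noteq> 0" by auto
  have "((1 / norm v) *\<^sub>R v) \<bullet> (A *v ((1 / norm v) *\<^sub>R v)) = (1 / norm v)^2 * (v \<bullet> (A *v v))"
    by (rule quadratic_form_scaleR)
  then show ?thesis using that[of "(1 / norm v) *\<^sub>R v"] pos \<open>v \<noteq> 0\<close> by simp
qed

definition outer :: "real^'n \<Rightarrow> real^'n^'n" where
  "outer w = (\<chi> i j. w$i * w$j)"

lemma outer_mult_vec: "outer w *v z = (w \<bullet> z) *\<^sub>R w"
  by (simp add: outer_def matrix_vector_mult_def inner_vec_def vec_eq_iff sum_distrib_left mult_ac)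

lemma quadratic_form_outer: "y \<bullet> (outer w *v y) = (w \<bullet> y)^2"
  by (simp add: outer_mult_vec power2_eq_square inner_commute)

lemma sym_mat_outer: "sym_mat (outer w)"
  by (simp add: sym_mat_def outer_def transpose_def vec_eq_iff mult.commute)

lemma psd_mat_outer: "psd_mat (outer w)"
  by (simp add: psd_mat_def sym_mat_outer quadratic_form_outer)

lemma trace_outer: "trace (outer w) = w \<bullet> w"
  by (simp add: trace_def outer_def inner_vec_def)

lemma trace_mult_outer: "trace (B ** outer w) = w \<bullet> (B *v w)"
  by (simp add: trace_def outer_def matrix_matrix_mult_def matrix_vector_mult_def inner_vec_def
      sum_distrib_left mult_ac)

lemma trace_mult_diff_left: "trace ((A - B) ** X) = trace (A ** X) - trace (B ** (X :: real^'n^'n))"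
  by (simp add: trace_def matrix_matrix_mult_def sum_subtractf algebra_simps)

lemma trace_mult_scaleR_left: "trace ((c *\<^sub>R A) ** X) = c * trace (A ** (X :: real^'n^'n))"
  by (simp add: trace_def matrix_matrix_mult_def sum_distrib_left mult.assoc)

lemma trace_mult_diff_right: "trace (B ** (X - Y)) = trace (B ** X) - trace (B ** (Y :: real^'n^'n))"
  by (metis trace_mul_sym trace_mult_diff_left)

lemma trace_mult_scaleR_right: "trace (B ** (c *\<^sub>R X)) = c * trace (B ** (X :: real^'n^'n))"
  by (metis trace_mul_sym trace_mult_scaleR_left)

lemma transpose_diff: "transpose (A - B) = transpose A - (transpose B :: real^'n^'n)"
  by (simp add: transpose_def vec_eq_iff)

(* Peeling off the rank-one pieces (Xv)(Xv)^T / (v^T X v) writes X as a sum of psd rank-one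
   matrices, each contributing (Xv)^T B (Xv) \<ge> 0 to tr(BX); the kernel grows at every step. *)
lemma psd_mat_peel_outer:
  fixes X :: "real^'n^'n"
  assumes psd: "psd_mat X" and "X *v v \<noteq> 0"
  defines "X' \<equiv> X - (1 / (v \<bullet> (X *v v))) *\<^sub>R outer (X *v v)"
  shows "psd_mat X'" and "X' *v v = 0" and "\<And>z. X *v z = 0 \<Longrightarrow> X' *v z = 0"
proof -
  define c where "c = v \<bullet> (X *v v)"
  have sym: "sym_mat X" using psd by (rule psd_mat_imp_sym)
  have "0 < c" unfolding c_def using psd \<open>X *v v \<noteq> 0\<close> by (rule psd_mat_pos_if_mult_nonzero)
  have X'_mult: "X' *v z = X *v z - ((v \<bullet> (X *v z)) / c) *\<^sub>R (X *v v)" for z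
    using sym_mat_inner_commute[OF sym, of v z]
    by (simp add: X'_def c_def matrix_vector_mult_diff_rdistrib outer_mult_vec
        scaleR_matrix_vector_assoc[symmetric] inner_commute)
  show "X' *v v = 0" using \<open>0 < c\<close> by (simp add: X'_mult c_def)
  show "X' *v z = 0" if "X *v z = 0" for z using that by (simp add: X'_mult)
  show "psd_mat X'"
    unfolding psd_mat_def
  proof
    show "sym_mat X'" using sym sym_mat_outer[of "X *v v"]
      by (simp add: X'_def sym_mat_def transpose_scalar transpose_diff)
    show "\<forall>y. 0 \<le> y \<bullet> (X' *v y)"
    proof
      fix y
      have yv: "y \<bullet> (X *v v) = v \<bullet> (X *v y)" using sym_mat_inner_commute[OF sym] .
      have "(v \<bullet> (X *v y))^2 \<le> (y \<bullet> (X *v y)) * c"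
        using psd_mat_cauchy_schwarz[OF psd, of y v] sym_mat_inner_commute[OF sym, of v y]
        by (simp add: c_def)
      then show "0 \<le> y \<bullet> (X' *v y)"
        using \<open>0 < c\<close> by (simp add: X'_mult inner_diff_right yv field_simps power2_eq_square)
    qed
  qed
qed

lemma trace_mult_psd_nonneg:
  fixes B X :: "real^'n^'n"
  assumes "psd_mat B" and "psd_mat X"
  shows "0 \<le> trace (B ** X)"
  using assms(2)
proof (induction "CARD('n) - dim {x. X *v x = 0}" arbitrary: X rule: less_induct)
  case less
  show ?case
  proof (cases "X = 0")
    case True
    then show ?thesis by (simp add: trace_def matrix_matrix_mult_def)
  next
    case False
    then obtain v where v: "X *v v \<noteq> 0" by (metis matrix_eq matrix_vector_mult_0)
    define c where "c = v \<bullet> (X *v v)"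
    define X' where "X' = X - (1 / c) *\<^sub>R outer (X *v v)"
    note peel = psd_mat_peel_outer[OF less.prems v, folded c_def, folded X'_def]
    have "0 < c" unfolding c_def using less.prems v by (rule psd_mat_pos_if_mult_nonzero)
    have "{x. X *v x = 0} \<subset> {x. X' *v x = 0}" using peel(2,3) v by auto
    moreover have kernel_span: "span {x. M *v x = 0} = {x. M *v x = 0}" for M :: "real^'n^'n"
      by (auto simp: subspace_def matrix_vector_right_distrib matrix_vector_mult_scaleR)
    ultimately have "dim {x. X *v x = 0} < dim {x. X' *v x = 0}"
      by (intro dim_psubset) (simp only: kernel_span)
    moreover have "dim {x. X' *v x = 0} \<le> CARD('n)" by (rule dim_subset_UNIV_cart)
    ultimately have "0 \<le> trace (B ** X')" by (intro less.hyps peel(1)) linarith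
    moreover have "trace (B ** X) = trace (B ** X') + (1 / c) * trace (B ** outer (X *v v))"
      by (simp add: X'_def trace_mult_diff_right trace_mult_scaleR_right)
    moreover have "0 \<le> trace (B ** outer (X *v v))"
      using psd_mat_nonneg[OF assms(1)] by (simp add: trace_mult_outer)
    ultimately show ?thesis using \<open>0 < c\<close> by simp
  qed
qed

lemma cSup_powr_half_eq_sqrt_max:
  fixes f :: "'a \<Rightarrow> real"
  assumes "P x0" and "\<And>x. P x \<Longrightarrow> 0 \<le> f x" and "\<And>x. P x \<Longrightarrow> f x \<le> f x0"
  shows "Sup {f x powr (1/2) | x. P x} = sqrt (f x0)"
proof (rule cSup_eq_maximum)
  have "sqrt (f x0) = f x0 powr (1/2)" using assms(1,2) by (simp add: powr_half_sqrt)
  then show "sqrt (f x0) \<in> {f x powr (1/2) | x. P x}" using assms(1) by blast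
  show "z \<le> sqrt (f x0)" if "z \<in> {f x powr (1/2) | x. P x}" for z
    using that assms(2,3) by (auto simp: powr_half_sqrt)
qed

locale product_maximiser =
  fixes A1 A2 :: "real^'n^'n" and x0 :: "real^'n"
  assumes psd1: "psd_mat A1" and psd2: "psd_mat A2" and unit: "norm x0 = 1"
    and maximal: "\<And>x. norm x = 1 \<Longrightarrow>
      (x \<bullet> (A1 *v x)) * (x \<bullet> (A2 *v x)) \<le> (x0 \<bullet> (A1 *v x0)) * (x0 \<bullet> (A2 *v x0))"
begin

abbreviation p :: real where "p \<equiv> x0 \<bullet> (A1 *v x0)"
abbreviation q :: real where "q \<equiv> x0 \<bullet> (A2 *v x0)"

lemma maximal_homogeneous: "(y \<bullet> (A1 *v y)) * (y \<bullet> (A2 *v y)) \<le> (y \<bullet> y)^2 * (p*q)"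
proof (cases "y = 0")
  case False
  define c where "c = norm y"
  have "0 < c" using False by (simp add: c_def)
  have y: "y = c *\<^sub>R ((1 / c) *\<^sub>R y)" using \<open>0 < c\<close> by simp
  have "(y \<bullet> (A1 *v y)) * (y \<bullet> (A2 *v y))
      = (c^2)^2 * ((((1 / c) *\<^sub>R y) \<bullet> (A1 *v ((1 / c) *\<^sub>R y)))
                    * (((1 / c) *\<^sub>R y) \<bullet> (A2 *v ((1 / c) *\<^sub>R y))))"
    by (subst (1 2 3 4) y, simp only: quadratic_form_scaleR) (simp add: power2_eq_square)
  also have "\<dots> \<le> (c^2)^2 * (p*q)"
    using \<open>0 < c\<close> by (intro mult_left_mono maximal) (simp_all add: c_def)
  finally show ?thesis by (simp add: c_def power2_norm_eq_inner)
qed simp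

lemma tangent_unit:
  assumes "norm e = 1" and "x0 \<bullet> e = 0"
  shows "q * (x0 \<bullet> (A1 *v e)) + p * (x0 \<bullet> (A2 *v e)) = 0"
    and "q * (e \<bullet> (A1 *v e)) + p * (e \<bullet> (A2 *v e)) \<le> 2*p*q"
proof -
  have circle_norm: "(x0 + t *\<^sub>R e) \<bullet> (x0 + t *\<^sub>R e) = 1 + t^2" for t
    using assms unit by (simp add: inner_add_left inner_add_right inner_commute norm_eq_1 power2_eq_square)
  have circle_form: "(x0 + t *\<^sub>R e) \<bullet> (A *v (x0 + t *\<^sub>R e))
      = x0 \<bullet> (A *v x0) + 2 * (x0 \<bullet> (A *v e)) * t + (e \<bullet> (A *v e)) * t^2" if "psd_mat A" for A t
    using quadratic_form_lincomb[OF psd_mat_imp_sym[OF that], of 1 x0 t e] by (simp add: algebra_simps)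
  have "(p + 2 * (x0 \<bullet> (A1 *v e)) * t + (e \<bullet> (A1 *v e)) * t^2)
      * (q + 2 * (x0 \<bullet> (A2 *v e)) * t + (e \<bullet> (A2 *v e)) * t^2) \<le> p*q * (1 + t^2)^2" for t
    using maximal_homogeneous[of "x0 + t *\<^sub>R e"] by (simp add: circle_norm circle_form psd1 psd2 mult_ac)
  note bound = tangent_bound[OF psd_mat_nonneg[OF psd1] psd_mat_nonneg[OF psd2]
      psd_mat_cauchy_schwarz[OF psd1] psd_mat_cauchy_schwarz[OF psd2] this]
  show "q * (x0 \<bullet> (A1 *v e)) + p * (x0 \<bullet> (A2 *v e)) = 0"
    and "q * (e \<bullet> (A1 *v e)) + p * (e \<bullet> (A2 *v e)) \<le> 2*p*q"
    using bound by simp_all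
qed

lemma tangent_orthogonal:
  assumes "x0 \<bullet> z = 0"
  shows "q * (x0 \<bullet> (A1 *v z)) + p * (x0 \<bullet> (A2 *v z)) = 0"
    and "q * (z \<bullet> (A1 *v z)) + p * (z \<bullet> (A2 *v z)) \<le> 2*p*q * (z \<bullet> z)"
proof -
  define e where "e = (1 / norm z) *\<^sub>R z"
  have z: "z = norm z *\<^sub>R e" by (simp add: e_def)
  have "norm e = 1" "x0 \<bullet> e = 0" if "z \<noteq> 0" using that assms by (simp_all add: e_def)
  note tangent = tangent_unit[OF this]
  have "q * (x0 \<bullet> (A1 *v z)) + p * (x0 \<bullet> (A2 *v z))
      = norm z * (q * (x0 \<bullet> (A1 *v e)) + p * (x0 \<bullet> (A2 *v e)))"
    by (subst (1 2) z) (simp add: algebra_simps)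
  then show "q * (x0 \<bullet> (A1 *v z)) + p * (x0 \<bullet> (A2 *v z)) = 0"
    using tangent(1) by (cases "z = 0") simp_all
  have "q * (z \<bullet> (A1 *v z)) + p * (z \<bullet> (A2 *v z))
      = (norm z)^2 * (q * (e \<bullet> (A1 *v e)) + p * (e \<bullet> (A2 *v e)))"
    by (subst (1 2 3 4) z, simp only: quadratic_form_scaleR) (simp add: algebra_simps)
  also have "\<dots> \<le> (norm z)^2 * (2*p*q)"
    using tangent(2) by (cases "z = 0") (simp_all add: mult_left_mono)
  finally show "q * (z \<bullet> (A1 *v z)) + p * (z \<bullet> (A2 *v z)) \<le> 2*p*q * (z \<bullet> z)"
    by (simp add: power2_norm_eq_inner mult_ac)
qed

lemma tangent_form_le: "q * (y \<bullet> (A1 *v y)) + p * (y \<bullet> (A2 *v y)) \<le> 2*p*q * (y \<bullet> y)"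
proof -
  define \<alpha> where "\<alpha> = x0 \<bullet> y"
  define z where "z = y - \<alpha> *\<^sub>R x0"
  have x0x0: "x0 \<bullet> x0 = 1" using unit by (simp add: norm_eq_1)
  have orth: "x0 \<bullet> z = 0" by (simp add: z_def \<alpha>_def x0x0 inner_diff_right)
  have y: "y = \<alpha> *\<^sub>R x0 + 1 *\<^sub>R z" by (simp add: z_def)
  have yy: "y \<bullet> y = \<alpha>^2 + z \<bullet> z"
    by (subst (1 2) y) (simp add: inner_add_left inner_add_right inner_commute orth x0x0 power2_eq_square)
  have form: "y \<bullet> (A *v y) = \<alpha>^2 * (x0 \<bullet> (A *v x0)) + 2*\<alpha> * (x0 \<bullet> (A *v z)) + z \<bullet> (A *v z)"
    if "psd_mat A" for A
    by (subst (1 2) y, subst quadratic_form_lincomb[OF psd_mat_imp_sym[OF that]]) simp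
  have "q * (y \<bullet> (A1 *v y)) + p * (y \<bullet> (A2 *v y))
      = 2*p*q * \<alpha>^2 + 2*\<alpha> * (q * (x0 \<bullet> (A1 *v z)) + p * (x0 \<bullet> (A2 *v z)))
        + (q * (z \<bullet> (A1 *v z)) + p * (z \<bullet> (A2 *v z)))"
    by (simp add: form psd1 psd2 algebra_simps)
  also have "\<dots> \<le> 2*p*q * (y \<bullet> y)"
    using tangent_orthogonal[OF orth] by (simp add: yy algebra_simps)
  finally show ?thesis .
qed

lemma psd_mat_tangent_certificate: "psd_mat ((2*p*q) *\<^sub>R mat 1 - q *\<^sub>R A1 - p *\<^sub>R A2)"
  unfolding psd_mat_def
proof
  show "sym_mat ((2*p*q) *\<^sub>R mat 1 - q *\<^sub>R A1 - p *\<^sub>R A2)"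
    using psd_mat_imp_sym[OF psd1] psd_mat_imp_sym[OF psd2]
    by (simp add: sym_mat_def transpose_diff transpose_scalar)
  show "\<forall>y. 0 \<le> y \<bullet> (((2*p*q) *\<^sub>R mat 1 - q *\<^sub>R A1 - p *\<^sub>R A2) *v y)"
  proof
    fix y
    show "0 \<le> y \<bullet> (((2*p*q) *\<^sub>R mat 1 - q *\<^sub>R A1 - p *\<^sub>R A2) *v y)"
      using tangent_form_le[of y]
      by (simp add: matrix_vector_mult_diff_rdistrib scaleR_matrix_vector_assoc[symmetric] inner_diff_right)
  qed
qed

lemma trace_tangent_le:
  assumes "psd_mat X" and "trace X = 1"
  shows "q * trace (A1 ** X) + p * trace (A2 ** X) \<le> 2*p*q"
  using trace_mult_psd_nonneg[OF psd_mat_tangent_certificate assms(1)] assms(2)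
  by (simp add: trace_mult_diff_left trace_mult_scaleR_left)

lemma trace_product_le_nondegenerate:
  assumes "psd_mat X" and "trace X = 1" and "0 < p \<or> 0 < q"
  shows "trace (A1 ** X) * trace (A2 ** X) \<le> p*q"
  using trace_mult_psd_nonneg[OF psd1 assms(1)] trace_mult_psd_nonneg[OF psd2 assms(1)]
    psd_mat_nonneg[OF psd1] psd_mat_nonneg[OF psd2] assms(3) trace_tangent_le[OF assms(1,2)]
  by (rule product_le_of_tangent_bound)

lemma trace_product_le:
  assumes "psd_mat X" and "trace X = 1"
  shows "trace (A1 ** X) * trace (A2 ** X) \<le> p*q"
proof (cases "0 < p \<or> 0 < q")
  case True
  with assms show ?thesis by (rule trace_product_le_nondegenerate)
next
  case False
  then have "p = 0" "q = 0"
    using psd_mat_nonneg[OF psd1, of x0] psd_mat_nonneg[OF psd2, of x0] by simp_all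
  show ?thesis
  proof (cases "A1 = 0")
    case True
    then show ?thesis using \<open>p = 0\<close> by (simp add: trace_def matrix_matrix_mult_def)
  next
    case False
    \<comment> \<open>The product vanishes on the whole sphere, so every point is a maximiser.\<close>
    then obtain x1 where x1: "norm x1 = 1" "0 < x1 \<bullet> (A1 *v x1)"
      using psd_mat_nonzero psd1 by blast
    interpret x1: product_maximiser A1 A2 x1
    proof
      show "(x \<bullet> (A1 *v x)) * (x \<bullet> (A2 *v x)) \<le> (x1 \<bullet> (A1 *v x1)) * (x1 \<bullet> (A2 *v x1))"
        if "norm x = 1" for x
        using maximal[OF that] \<open>p = 0\<close>
          mult_nonneg_nonneg[OF psd_mat_nonneg[OF psd1, of x1] psd_mat_nonneg[OF psd2, of x1]]
        by simp
    qed (use psd1 psd2 x1 in auto)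
    have "trace (A1 ** X) * trace (A2 ** X) \<le> (x1 \<bullet> (A1 *v x1)) * (x1 \<bullet> (A2 *v x1))"
      using assms x1(2) by (intro x1.trace_product_le_nondegenerate) auto
    also have "\<dots> \<le> p*q" by (rule maximal[OF x1(1)])
    finally show ?thesis .
  qed
qed

end

theorem mainTheorem6:
  fixes A1 A2 :: "real^'n^'n"
  assumes "psd_mat A1" and "psd_mat A2"
  shows "Opt2 A1 A2 = OptSDP2 A1 A2"
proof -
  have "\<exists>x\<in>sphere 0 1. \<forall>y\<in>sphere 0 1.
      (y \<bullet> (A1 *v y)) * (y \<bullet> (A2 *v y)) \<le> (x \<bullet> (A1 *v x)) * (x \<bullet> (A2 *v x))"
    by (rule continuous_attains_sup) (auto intro!: continuous_intros)
  then obtain x0 where "norm x0 = 1"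
    and "\<And>y. norm y = 1 \<Longrightarrow>
      (y \<bullet> (A1 *v y)) * (y \<bullet> (A2 *v y)) \<le> (x0 \<bullet> (A1 *v x0)) * (x0 \<bullet> (A2 *v x0))"
    by auto
  with assms interpret product_maximiser A1 A2 x0 by unfold_locales
  have nonneg: "0 \<le> (x \<bullet> (A1 *v x)) * (x \<bullet> (A2 *v x))" for x
    using assms by (simp add: psd_mat_nonneg)
  have "Opt2 A1 A2 = sqrt (p*q)"
    unfolding Opt2_def by (rule cSup_powr_half_eq_sqrt_max) (simp_all add: unit maximal nonneg)
  moreover have "OptSDP2 A1 A2 = sqrt (trace (A1 ** outer x0) * trace (A2 ** outer x0))"
    unfolding OptSDP2_def
  proof (rule cSup_powr_half_eq_sqrt_max)
    show "psd_mat (outer x0) \<and> trace (outer x0) = 1"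
      using unit by (simp add: psd_mat_outer trace_outer norm_eq_1)
  qed (use assms trace_product_le in \<open>auto simp: trace_mult_outer trace_mult_psd_nonneg\<close>)
  ultimately show ?thesis by (simp add: trace_mult_outer)
qed

end
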